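(* Let $\Gamma$ be a weighted digraph with vertex set $\{1,\dots,n\}$, $n>1$, without loops and with strictly positive arc weights, with Laplacian matrix $L$, matrices of in-forests $Q_k$ and in-forest weights $\sigma_k$. For every $m=0,1,2,\dots$, $$(-L)^m=\sum_{k=0}^{m}\alpha_kQ_{m-k},$$ where $\alpha_0=1$ and, for $k\ge1$, $$\alpha_k=\sum_{(p_1,\dots,p_k):\ \sum_{i=1}^k ip_i=k}(-1)^{\sum_{i=1}^k p_i}\frac{\big(\sum_{i=1}^k p_i\big)!}{\prod_{i=1}^k p_i!}\prod_{i=1}^k\sigma_i^{p_i},$$ the outer sum ranging over all $k$-tuples of nonnegative integers $(p_1,\dots,p_k)$ with $\sum_{i=1}^k ip_i=k$.
   Context: $W=(w_{ij})$ is the matrix of arc weights ($w_{ij}>0$ iff there is an arc $i\to j$, else $0$). The Laplacian $L=(\ell_{ij})$: $\ell_{ij}=-w_{ij}$ for $j\ne i$, $\ell_{ii}=\sum_{k\ne i}w_{ik}$. The weight of a subgraph is the product of its arc weights (1 if no arcs); the weight of a set of subgraphs is the sum of their weights (0 for the empty set). A converging tree is a weakly connected digraph with one vertex (the root) of outdegree 0 and all others of outdegree 1; an in-forest is a spanning subgraph of $\Gamma$ whose weak components are converging trees. $\sigma_k$ is the total weight of in-forests of $\Gamma$ with $k$ arcs ($\sigma_0=1$). $Q_k=(q^k_{ij})$ where $q^k_{ij}$ is the total weight of in-forests with $k$ arcs in which $i$ lies in a tree rooted at $j$ ($Q_0=I$). *)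

theory Defs
  imports "HOL-Analysis.Analysis"
begin

text \<open>Vertices of the digraph are the elements of a finite type 'n (so n = CARD('n)).
  Arc weights are given by w; there is an arc i -> j iff w i j > 0.\<close>

definition arcs :: "('n \<Rightarrow> 'n \<Rightarrow> real) \<Rightarrow> ('n \<times> 'n) set" where
  "arcs w = {(i, j). w i j > 0}"

definition outdeg :: "('n \<times> 'n) set \<Rightarrow> 'n \<Rightarrow> nat" where
  "outdeg E v = card {u. (v, u) \<in> E}"

definition converging_tree :: "'n set \<Rightarrow> ('n \<times> 'n) set \<Rightarrow> bool" where
  "converging_tree V E \<longleftrightarrow> E \<subseteq> V \<times> V \<and>
     (\<forall>x\<in>V. \<forall>y\<in>V. (x, y) \<in> (E \<union> E\<inverse>)\<^sup>*) \<and>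
     (\<exists>r\<in>V. outdeg E r = 0 \<and> (\<forall>v\<in>V - {r}. outdeg E v = 1))"

definition weak_comp :: "('n \<times> 'n) set \<Rightarrow> 'n \<Rightarrow> 'n set" where
  "weak_comp F i = {j. (i, j) \<in> (F \<union> F\<inverse>)\<^sup>*}"

definition in_forest :: "('n \<Rightarrow> 'n \<Rightarrow> real) \<Rightarrow> ('n \<times> 'n) set \<Rightarrow> bool" where
  "in_forest w F \<longleftrightarrow> F \<subseteq> arcs w \<and>
     (\<forall>i. converging_tree (weak_comp F i) (F \<inter> (weak_comp F i \<times> weak_comp F i)))"

definition in_tree_rooted_at :: "('n \<times> 'n) set \<Rightarrow> 'n \<Rightarrow> 'n \<Rightarrow> bool" where
  "in_tree_rooted_at F i j \<longleftrightarrow> j \<in> weak_comp F i \<and>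
     outdeg (F \<inter> (weak_comp F i \<times> weak_comp F i)) j = 0"

definition subgraph_weight :: "('n \<Rightarrow> 'n \<Rightarrow> real) \<Rightarrow> ('n \<times> 'n) set \<Rightarrow> real" where
  "subgraph_weight w F = (\<Prod>(i, j)\<in>F. w i j)"

definition in_forests :: "('n::finite \<Rightarrow> 'n \<Rightarrow> real) \<Rightarrow> nat \<Rightarrow> ('n \<times> 'n) set set" where
  "in_forests w k = {F. in_forest w F \<and> card F = k}"

definition sigma :: "('n::finite \<Rightarrow> 'n \<Rightarrow> real) \<Rightarrow> nat \<Rightarrow> real" where
  "sigma w k = (\<Sum>F\<in>in_forests w k. subgraph_weight w F)"

definition Qmat :: "('n::finite \<Rightarrow> 'n \<Rightarrow> real) \<Rightarrow> nat \<Rightarrow> real ^'n ^'n" where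
  "Qmat w k = (\<chi> i j. \<Sum>F\<in>{F\<in>in_forests w k. in_tree_rooted_at F i j}. subgraph_weight w F)"

definition laplacian :: "('n::finite \<Rightarrow> 'n \<Rightarrow> real) \<Rightarrow> real ^'n ^'n" where
  "laplacian w = (\<chi> i j. if i = j then (\<Sum>k\<in>UNIV - {i}. w i k) else - w i j)"

primrec matpow :: "real ^'n ^'n \<Rightarrow> nat \<Rightarrow> real ^'n ^'n" where
  "matpow A 0 = mat 1"
| "matpow A (Suc m) = matpow A m ** A"

text \<open>alpha_k; k-tuples (p_1,...,p_k) are functions extensional on {1..k}.\<close>
definition alpha :: "('n::finite \<Rightarrow> 'n \<Rightarrow> real) \<Rightarrow> nat \<Rightarrow> real" where
  "alpha w k = (if k = 0 then 1 else
     (\<Sum>p\<in>{p. p \<in> extensional {1..k} \<and> (\<Sum>i=1..k. i * p i) = k}.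
        (-1) ^ (\<Sum>i=1..k. p i) * (fact (\<Sum>i=1..k. p i) / (\<Prod>i=1..k. fact (p i)))
        * (\<Prod>i=1..k. sigma w i ^ p i)))"

end

theory Submission
  imports Defs
begin

text \<open>
  Two recurrences drive the proof. The forest matrices satisfy
  Q(k+1) = sigma(k+1) I - L Q(k): the entry (-L Q(k))(i,j) is a sum over k-arc in-forests F and
  arcs (i,l) of w(i,l) wt(F) ([l lies in a tree of F rooted at j] - [i lies in a tree rooted at j]).
  The pairs in which i is a root of F correspond, through G = F + (i,l), to the (k+1)-arc in-forests
  in which i is not a root; the pairs in which i has an out-arc (i,u) cancel, because after removing
  (i,u) the summand is antisymmetric in u and l. The coefficients alpha(k) are those of the power
  series 1/(1 + sum_i sigma(i) t^i), expanded by the multinomial theorem, hence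
  alpha(m) = - sum_{i=1..m} sigma(i) alpha(m-i). Multiplying the expansion of (-L)^m by -L and
  applying both recurrences gives the expansion of (-L)^(m+1).
\<close>

section \<open>In-forests as single-valued acyclic arc sets\<close>

text \<open>The roots of an arc set F are the vertices outside Domain F.\<close>

definition forest :: "('a \<times> 'a) set \<Rightarrow> bool" where
  "forest F \<longleftrightarrow> single_valued F \<and> acyclic F"

definition forest_root :: "('a \<times> 'a) set \<Rightarrow> 'a \<Rightarrow> 'a" where
  "forest_root F x = (THE r. (x, r) \<in> F\<^sup>* \<and> r \<notin> Domain F)"

lemma single_valued_weak_path_to_sink:
  assumes "single_valued F" "r \<notin> Domain F" "(x, r) \<in> (F \<union> F\<inverse>)\<^sup>*"
  shows "(x, r) \<in> F\<^sup>*"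
  using assms(3)
proof (induction rule: converse_rtrancl_induct)
  case base
  then show ?case by simp
next
  case (step y z)
  show ?case
  proof (cases "(y, z) \<in> F")
    case True
    then show ?thesis using step.IH by (rule converse_rtrancl_into_rtrancl)
  next
    case False
    with step.hyps(1) have zy: "(z, y) \<in> F" by auto
    from step.IH show ?thesis
    proof (cases rule: converse_rtranclE)
      case base
      then show ?thesis using zy assms(2) by auto
    next
      case (step z')
      with zy assms(1) have "z' = y" by (auto dest: single_valuedD)
      then show ?thesis using step by simp
    qed
  qed
qed

lemma sinks_weakly_connected_eq:
  assumes "single_valued F" "a \<notin> Domain F" "b \<notin> Domain F" "(a, b) \<in> (F \<union> F\<inverse>)\<^sup>*"
  shows "a = b"
  using single_valued_weak_path_to_sink[OF assms(1,3,4)] assms(2)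
  by (auto elim: converse_rtranclE)

lemma rtrancl_Un_converse_sym:
  "(x, y) \<in> (R \<union> R\<inverse>)\<^sup>* \<Longrightarrow> (y, x) \<in> (R \<union> R\<inverse>)\<^sup>*"
  using sym_rtrancl[OF sym_Un_converse] by (rule symD)

lemma rtrancl_into_rtrancl_Un_converse: "(x, y) \<in> R\<^sup>* \<Longrightarrow> (x, y) \<in> (R \<union> R\<inverse>)\<^sup>*"
  using rtrancl_mono[of R "R \<union> R\<inverse>"] by blast

lemma single_valued_cycle_closed:
  assumes "single_valued F" "(c, c) \<in> F\<^sup>+" "(c, x) \<in> F\<^sup>*"
  shows "(x, x) \<in> F\<^sup>+"
  using assms(3)
proof (induction rule: rtrancl_induct)
  case base
  then show ?case using assms(2) by simp
next
  case (step y z)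
  from tranclD[OF step.IH] obtain y' where "(y, y') \<in> F" "(y', y) \<in> F\<^sup>*" by blast
  moreover from this(1) have "y' = z" using step.hyps(2) assms(1) by (auto dest: single_valuedD)
  ultimately show ?case using step.hyps(2) by (meson rtrancl_into_trancl1)
qed

lemma acyclic_path_to_sink:
  fixes F :: "('a::finite \<times> 'a) set"
  assumes "acyclic F"
  obtains r where "(x, r) \<in> F\<^sup>*" "r \<notin> Domain F"
proof -
  have "wf (F\<inverse>)" using finite_acyclic_wf_converse[OF finite assms] .
  then have "\<exists>r. (x, r) \<in> F\<^sup>* \<and> r \<notin> Domain F"
  proof (induction x rule: wf_induct_rule)
    case (less x)
    show ?case
    proof (cases "x \<in> Domain F")
      case True
      then obtain y where "(x, y) \<in> F" by blast
      with less obtain r where "(y, r) \<in> F\<^sup>*" "r \<notin> Domain F" by blast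
      with \<open>(x, y) \<in> F\<close> show ?thesis by (meson converse_rtrancl_into_rtrancl)
    qed blast
  qed
  with that show ?thesis by blast
qed

lemma forest_root_iff:
  fixes F :: "('a::finite \<times> 'a) set"
  assumes "forest F"
  shows "forest_root F x = r \<longleftrightarrow> (x, r) \<in> F\<^sup>* \<and> r \<notin> Domain F"
proof -
  have sv: "single_valued F" and ac: "acyclic F" using assms by (auto simp: forest_def)
  obtain r0 where r0: "(x, r0) \<in> F\<^sup>*" "r0 \<notin> Domain F" using acyclic_path_to_sink[OF ac] .
  have unique: "r = r0" if "(x, r) \<in> F\<^sup>*" "r \<notin> Domain F" for r
  proof (rule sinks_weakly_connected_eq[OF sv that(2) r0(2)])
    show "(r, r0) \<in> (F \<union> F\<inverse>)\<^sup>*"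
      using rtrancl_Un_converse_sym[OF rtrancl_into_rtrancl_Un_converse[OF that(1)]]
        rtrancl_into_rtrancl_Un_converse[OF r0(1)] by (rule rtrancl_trans)
  qed
  have "forest_root F x = r0"
    unfolding forest_root_def by (rule the_equality) (use r0 unique in blast)+
  with r0 unique show ?thesis by blast
qed

lemma forest_rootD:
  fixes F :: "('a::finite \<times> 'a) set"
  assumes "forest F"
  shows "(x, forest_root F x) \<in> F\<^sup>*" and "forest_root F x \<notin> Domain F"
  using forest_root_iff[OF assms, of x "forest_root F x"] by simp_all

lemma forest_root_eq_self:
  fixes F :: "('a::finite \<times> 'a) set"
  assumes "forest F" "r \<notin> Domain F"
  shows "forest_root F r = r"
  using forest_root_iff[OF assms(1)] assms(2) by blast

lemma outdeg_eq_0_iff: "outdeg F v = 0 \<longleftrightarrow> v \<notin> Domain (F :: ('a::finite \<times> 'a) set)"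
  unfolding outdeg_def by (auto simp: card_eq_0_iff)

lemma single_valued_iff_outdeg_le_1:
  "single_valued F \<longleftrightarrow> (\<forall>v. outdeg (F :: ('a::finite \<times> 'a) set) v \<le> 1)"
  unfolding outdeg_def single_valued_def by (simp add: card_le_Suc0_iff_eq)

lemma weak_comp_arc_closed: "x \<in> weak_comp F i \<Longrightarrow> (x, y) \<in> F \<Longrightarrow> y \<in> weak_comp F i"
  unfolding weak_comp_def by (auto intro: rtrancl_into_rtrancl)

lemma weak_comp_connected:
  "x \<in> weak_comp F i \<Longrightarrow> y \<in> weak_comp F i \<Longrightarrow> (x, y) \<in> (F \<union> F\<inverse>)\<^sup>*"
  unfolding weak_comp_def by (blast intro: rtrancl_trans rtrancl_Un_converse_sym)

lemma outdeg_restrict_weak_comp: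
  "x \<in> weak_comp F i \<Longrightarrow> outdeg (F \<inter> (weak_comp F i \<times> weak_comp F i)) x = outdeg F x"
proof -
  assume "x \<in> weak_comp F i"
  then have "{u. (x, u) \<in> F \<inter> (weak_comp F i \<times> weak_comp F i)} = {u. (x, u) \<in> F}"
    by (auto intro: weak_comp_arc_closed)
  then show ?thesis unfolding outdeg_def by simp
qed

lemma weak_comp_connected_restrict:
  assumes "x \<in> weak_comp F i"
  defines "E \<equiv> F \<inter> (weak_comp F i \<times> weak_comp F i)"
  shows "(i, x) \<in> (E \<union> E\<inverse>)\<^sup>*"
proof -
  have "(i, x) \<in> (F \<union> F\<inverse>)\<^sup>*" using assms by (simp add: weak_comp_def)
  then show ?thesis
  proof (induction rule: rtrancl_induct)
    case (step y z)
    then have "y \<in> weak_comp F i" "z \<in> weak_comp F i"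
      unfolding weak_comp_def by (auto intro: rtrancl_into_rtrancl)
    with step have "(y, z) \<in> E \<union> E\<inverse>" unfolding E_def by auto
    with step.IH show ?case by (rule rtrancl_into_rtrancl)
  qed simp
qed

lemma converging_tree_weak_comp_iff:
  fixes F :: "('a::finite \<times> 'a) set" and i :: 'a
  defines "C \<equiv> weak_comp F i"
  shows "converging_tree C (F \<inter> (C \<times> C)) \<longleftrightarrow>
    (\<exists>r\<in>C. r \<notin> Domain F \<and> (\<forall>v\<in>C - {r}. outdeg F v = 1))"
proof -
  let ?E = "F \<inter> (C \<times> C)"
  have "(x, y) \<in> (?E \<union> ?E\<inverse>)\<^sup>*" if "x \<in> C" "y \<in> C" for x y
    using rtrancl_Un_converse_sym[OF weak_comp_connected_restrict[OF that(1)[unfolded C_def]]]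
      weak_comp_connected_restrict[OF that(2)[unfolded C_def]]
    unfolding C_def by (rule rtrancl_trans)
  moreover have "outdeg ?E v = outdeg F v" if "v \<in> C" for v
    using that unfolding C_def by (rule outdeg_restrict_weak_comp)
  ultimately show ?thesis
    unfolding converging_tree_def by (auto simp: outdeg_eq_0_iff)
qed

lemma in_forest_iff:
  fixes F :: "('n::finite \<times> 'n) set"
  shows "in_forest w F \<longleftrightarrow> F \<subseteq> arcs w \<and> forest F"
proof
  assume F: "in_forest w F"
  have tree: "\<exists>r\<in>weak_comp F i. r \<notin> Domain F \<and> (\<forall>v\<in>weak_comp F i - {r}. outdeg F v = 1)"
    for i
  proof -
    have "converging_tree (weak_comp F i) (F \<inter> (weak_comp F i \<times> weak_comp F i))"
      using F unfolding in_forest_def by blast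
    then show ?thesis unfolding converging_tree_weak_comp_iff .
  qed
  have sv: "single_valued F"
    unfolding single_valued_iff_outdeg_le_1
  proof
    fix v
    from tree[of v] obtain r where r: "r \<notin> Domain F" "\<forall>u\<in>weak_comp F v - {r}. outdeg F u = 1"
      by blast
    show "outdeg F v \<le> 1"
    proof (cases "v = r")
      case True
      with r(1) outdeg_eq_0_iff[of F v] show ?thesis by simp
    next
      case False
      moreover have "v \<in> weak_comp F v" by (simp add: weak_comp_def)
      ultimately show ?thesis using r(2) by simp
    qed
  qed
  have "acyclic F"
    unfolding acyclic_def
  proof (intro allI notI)
    fix c assume "(c, c) \<in> F\<^sup>+"
    from tree[of c] obtain r where r: "r \<in> weak_comp F c" "r \<notin> Domain F" by blast
    then have "(c, r) \<in> F\<^sup>*"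
      using single_valued_weak_path_to_sink[OF sv] by (simp add: weak_comp_def)
    with sv \<open>(c, c) \<in> F\<^sup>+\<close> have "(r, r) \<in> F\<^sup>+" by (rule single_valued_cycle_closed)
    with r(2) show False by (auto dest: tranclD)
  qed
  with F sv show "F \<subseteq> arcs w \<and> forest F" by (simp add: in_forest_def forest_def)
next
  assume F: "F \<subseteq> arcs w \<and> forest F"
  then have sv: "single_valued F" and ac: "acyclic F" by (auto simp: forest_def)
  have "converging_tree (weak_comp F i) (F \<inter> (weak_comp F i \<times> weak_comp F i))" for i
  proof -
    obtain r where r: "(i, r) \<in> F\<^sup>*" "r \<notin> Domain F" using acyclic_path_to_sink[OF ac] .
    then have rC: "r \<in> weak_comp F i" by (simp add: weak_comp_def rtrancl_into_rtrancl_Un_converse)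
    have "outdeg F v = 1" if v: "v \<in> weak_comp F i - {r}" for v
    proof -
      have "v \<in> Domain F"
        using sinks_weakly_connected_eq[OF sv r(2) _ weak_comp_connected[OF rC]] v by blast
      then have "outdeg F v \<noteq> 0" by (simp add: outdeg_eq_0_iff)
      moreover have "outdeg F v \<le> 1" using sv single_valued_iff_outdeg_le_1 by blast
      ultimately show ?thesis by linarith
    qed
    with rC r(2) show ?thesis unfolding converging_tree_weak_comp_iff by blast
  qed
  with F show "in_forest w F" by (simp add: in_forest_def)
qed

lemma in_tree_rooted_at_iff:
  fixes F :: "('a::finite \<times> 'a) set"
  assumes "forest F"
  shows "in_tree_rooted_at F i j \<longleftrightarrow> forest_root F i = j"
proof -
  have "in_tree_rooted_at F i j \<longleftrightarrow> j \<in> weak_comp F i \<and> j \<notin> Domain F"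
    unfolding in_tree_rooted_at_def by (metis outdeg_restrict_weak_comp outdeg_eq_0_iff)
  also have "\<dots> \<longleftrightarrow> (i, j) \<in> F\<^sup>* \<and> j \<notin> Domain F"
    using single_valued_weak_path_to_sink[of F j i] assms
    by (auto simp: weak_comp_def forest_def rtrancl_into_rtrancl_Un_converse)
  finally show ?thesis using forest_root_iff[OF assms] by simp
qed

section \<open>The recurrence for the forest matrices\<close>

lemma forest_insert_arc:
  fixes F :: "('a::finite \<times> 'a) set"
  assumes F: "forest F" and i: "i \<notin> Domain F" and l: "forest_root F l \<noteq> i"
  shows "forest (insert (i, l) F)"
proof -
  have "(l, i) \<notin> F\<^sup>*" using forest_root_iff[OF F, of l i] i l by blast
  moreover have "single_valued (insert (i, l) F)"
    using F i unfolding forest_def single_valued_def by blast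
  ultimately show ?thesis using F by (simp add: forest_def)
qed

lemma forest_root_insert_arc:
  fixes F :: "('a::finite \<times> 'a) set"
  assumes F: "forest F" and i: "i \<notin> Domain F" and l: "forest_root F l \<noteq> i"
  shows "forest_root (insert (i, l) F) x =
    (if forest_root F x = i then forest_root F l else forest_root F x)"
proof -
  let ?G = "insert (i, l) F"
  have G: "forest ?G" using forest_insert_arc[OF assms] .
  have paths: "(y, forest_root F y) \<in> ?G\<^sup>*" for y
    using forest_rootD(1)[OF F, of y] rtrancl_mono[of F ?G] by blast
  have sinks: "forest_root F y \<notin> Domain ?G" if "forest_root F y \<noteq> i" for y
    using forest_rootD(2)[OF F, of y] that by auto
  show ?thesis
  proof (cases "forest_root F x = i")
    case True
    with paths[of x] have "(x, l) \<in> ?G\<^sup>*" by (auto intro: rtrancl_into_rtrancl)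
    with paths[of l] have "(x, forest_root F l) \<in> ?G\<^sup>*" by (rule rtrancl_trans[rotated])
    with True sinks[OF l] show ?thesis by (simp add: forest_root_iff[OF G])
  next
    case False
    with paths[of x] sinks[of x] show ?thesis by (simp add: forest_root_iff[OF G])
  qed
qed

corollary forest_root_insert_arc_tail:
  fixes F :: "('a::finite \<times> 'a) set"
  assumes "forest F" "i \<notin> Domain F" "forest_root F l \<noteq> i"
  shows "forest_root (insert (i, l) F) i = forest_root F l"
  using forest_root_insert_arc[OF assms, of i] forest_root_eq_self[OF assms(1,2)] by simp

lemma forest_remove_arc:
  fixes G :: "('a::finite \<times> 'a) set"
  assumes G: "forest G" and e: "(i, u) \<in> G"
  shows "forest (G - {(i, u)})" "i \<notin> Domain (G - {(i, u)})" "forest_root (G - {(i, u)}) u \<noteq> i"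
proof -
  let ?F = "G - {(i, u)}"
  have sv: "single_valued G" and ac: "acyclic G" using G by (auto simp: forest_def)
  show F: "forest ?F"
    using sv ac single_valued_subset[of ?F G] acyclic_subset[of G ?F] by (auto simp: forest_def)
  show "i \<notin> Domain ?F" using sv e by (auto dest: single_valuedD)
  show "forest_root ?F u \<noteq> i"
  proof
    assume "forest_root ?F u = i"
    then have "(u, i) \<in> ?F\<^sup>*" using forest_root_iff[OF F] by blast
    then have "(u, i) \<in> G\<^sup>*" using rtrancl_mono[of ?F G] by blast
    with e have "(i, i) \<in> G\<^sup>+" by (rule rtrancl_into_trancl2)
    with ac show False by (simp add: acyclic_def)
  qed
qed

definition succ :: "('a \<times> 'a) set \<Rightarrow> 'a \<Rightarrow> 'a" where
  "succ F x = (THE y. (x, y) \<in> F)"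

lemma succ_eq: "single_valued G \<Longrightarrow> (i, u) \<in> G \<Longrightarrow> succ G i = u"
  unfolding succ_def by (blast dest: single_valuedD)

lemma succ_in: "single_valued G \<Longrightarrow> i \<in> Domain G \<Longrightarrow> (i, succ G i) \<in> G"
  using succ_eq by fastforce

lemma in_forests_iff:
  fixes w :: "'n::finite \<Rightarrow> 'n \<Rightarrow> real"
  shows "F \<in> in_forests w k \<longleftrightarrow> F \<subseteq> arcs w \<and> forest F \<and> card F = k"
  unfolding in_forests_def using in_forest_iff by blast

lemma in_forests_0: "in_forests w 0 = {{}}"
  by (auto simp: in_forests_iff forest_def arcs_def acyclic_def)

lemma subgraph_weight_insert:
  fixes F :: "('n::finite \<times> 'n) set"
  shows "(a, b) \<notin> F \<Longrightarrow> subgraph_weight w (insert (a, b) F) = w a b * subgraph_weight w F"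
  unfolding subgraph_weight_def by simp

lemma insert_out_arc_bij_betw:
  fixes w :: "'n::finite \<Rightarrow> 'n \<Rightarrow> real"
  shows "bij_betw (\<lambda>(F, l). insert (i, l) F)
    (SIGMA F:{F \<in> in_forests w k. i \<notin> Domain F}. {l. w i l > 0 \<and> forest_root F l \<noteq> i})
    {G \<in> in_forests w (Suc k). i \<in> Domain G}"
    (is "bij_betw ?f ?A ?B")
proof -
  let ?g = "\<lambda>G. (G - {(i, succ G i)}, succ G i)"
  have ins: "insert (i, l) F \<in> in_forests w (Suc k)" "succ (insert (i, l) F) i = l" "(i, l) \<notin> F"
    if F: "F \<in> in_forests w k" "i \<notin> Domain F" and l: "w i l > 0" "forest_root F l \<noteq> i" for F l
  proof -
    have forests: "forest F" "forest (insert (i, l) F)"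
      using F l forest_insert_arc by (auto simp: in_forests_iff)
    then show "insert (i, l) F \<in> in_forests w (Suc k)"
      using F l by (auto simp: in_forests_iff arcs_def card_insert_if)
    show "succ (insert (i, l) F) i = l" using forests by (simp add: forest_def succ_eq)
    show "(i, l) \<notin> F" using F(2) by auto
  qed
  have del: "G - {(i, succ G i)} \<in> in_forests w k" "i \<notin> Domain (G - {(i, succ G i)})"
    "forest_root (G - {(i, succ G i)}) (succ G i) \<noteq> i" "w i (succ G i) > 0"
    "insert (i, succ G i) (G - {(i, succ G i)}) = G"
    if G: "G \<in> in_forests w (Suc k)" "i \<in> Domain G" for G
  proof -
    have e: "(i, succ G i) \<in> G" using G by (auto simp: in_forests_iff forest_def succ_in)
    show "G - {(i, succ G i)} \<in> in_forests w k"
      using G e forest_remove_arc(1)[OF _ e] by (auto simp: in_forests_iff)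
    show "i \<notin> Domain (G - {(i, succ G i)})" "forest_root (G - {(i, succ G i)}) (succ G i) \<noteq> i"
      using G forest_remove_arc(2,3)[OF _ e] by (auto simp: in_forests_iff)
    show "w i (succ G i) > 0" using G e by (auto simp: in_forests_iff arcs_def)
    show "insert (i, succ G i) (G - {(i, succ G i)}) = G" using e by blast
  qed
  show ?thesis
  proof (rule bij_betw_byWitness[where f' = ?g])
    show "\<forall>x\<in>?A. ?g (?f x) = x" using ins(2,3) by auto
    show "\<forall>G\<in>?B. ?f (?g G) = G" using del(5) by auto
    show "?f ` ?A \<subseteq> ?B" using ins(1) by auto
    show "?g ` ?B \<subseteq> ?A" using del(1-4) by blast
  qed
qed

lemma sum_sum_antisym_eq_0:
  fixes f :: "'a \<Rightarrow> 'a \<Rightarrow> 'b::linordered_ab_group_add"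
  assumes antisym: "\<And>x y. f x y = - f y x"
  shows "(\<Sum>x\<in>A. \<Sum>y\<in>A. f x y) = 0"
proof -
  have "(\<Sum>x\<in>A. \<Sum>y\<in>A. f x y) = (\<Sum>y\<in>A. \<Sum>x\<in>A. f x y)" by (rule sum.swap)
  also have "\<dots> = (\<Sum>y\<in>A. \<Sum>x\<in>A. - f y x)" by (intro sum.cong refl antisym)
  also have "\<dots> = - (\<Sum>x\<in>A. \<Sum>y\<in>A. f x y)" by (simp add: sum_negf)
  finally show ?thesis by simp
qed

lemma sum_forests_sink_out_arcs:
  fixes w :: "'n::finite \<Rightarrow> 'n \<Rightarrow> real"
  shows "(\<Sum>F\<in>{F \<in> in_forests w k. i \<notin> Domain F}. \<Sum>l | w i l > 0.
      w i l * subgraph_weight w F * (of_bool (forest_root F l = j) - of_bool (forest_root F i = j)))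
    = (\<Sum>G\<in>in_forests w (Suc k).
      subgraph_weight w G * (of_bool (forest_root G i = j) - of_bool (i = j)))"
proof -
  let ?S = "{F \<in> in_forests w k. i \<notin> Domain F}"
  let ?B = "\<lambda>F. {l. w i l > 0 \<and> forest_root F l \<noteq> i}"
  let ?g = "\<lambda>G. subgraph_weight w G * (of_bool (forest_root G i = j) - of_bool (i = j))"
  have inner: "(\<Sum>l | w i l > 0.
      w i l * subgraph_weight w F * (of_bool (forest_root F l = j) - of_bool (forest_root F i = j)))
    = (\<Sum>l\<in>?B F. ?g (insert (i, l) F))" if "F \<in> ?S" for F
  proof (rule sum.mono_neutral_cong_right)
    have F: "forest F" "i \<notin> Domain F" using that by (auto simp: in_forests_iff)
    then have "(i, l) \<notin> F" for l by blast
    then show "w i l * subgraph_weight w F * (of_bool (forest_root F l = j) - of_bool (forest_root F i = j))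
      = ?g (insert (i, l) F)" if "l \<in> ?B F" for l
      using that forest_root_insert_arc_tail[OF F] forest_root_eq_self[OF F]
      by (simp add: subgraph_weight_insert)
    show "\<forall>l\<in>{l. w i l > 0} - ?B F.
      w i l * subgraph_weight w F * (of_bool (forest_root F l = j) - of_bool (forest_root F i = j)) = 0"
      using forest_root_eq_self[OF F] by auto
  qed auto
  have "(\<Sum>F\<in>?S. \<Sum>l | w i l > 0.
      w i l * subgraph_weight w F * (of_bool (forest_root F l = j) - of_bool (forest_root F i = j)))
    = (\<Sum>F\<in>?S. \<Sum>l\<in>?B F. ?g (insert (i, l) F))"
    using inner by (rule sum.cong[OF refl])
  also have "\<dots> = (\<Sum>(F, l)\<in>Sigma ?S ?B. ?g (insert (i, l) F))"
    by (rule sum.Sigma) auto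
  also have "\<dots> = (\<Sum>G\<in>{G \<in> in_forests w (Suc k). i \<in> Domain G}. ?g G)"
    using sum.reindex_bij_betw[OF insert_out_arc_bij_betw, of ?g] by (simp add: split_def)
  also have "\<dots> = (\<Sum>G\<in>in_forests w (Suc k). ?g G)"
    by (rule sum.mono_neutral_left) (auto simp: in_forests_iff forest_root_eq_self)
  finally show ?thesis .
qed

lemma sum_forests_nonsink_out_arcs_eq_0:
  fixes w :: "'n::finite \<Rightarrow> 'n \<Rightarrow> real"
  shows "(\<Sum>F\<in>{F \<in> in_forests w k. i \<in> Domain F}. \<Sum>l | w i l > 0.
      w i l * subgraph_weight w F * (of_bool (forest_root F l = j) - of_bool (forest_root F i = j)))
    = 0"
proof (cases k)
  case 0
  then have "{F \<in> in_forests w k. i \<in> Domain F} = {}" by (simp add: in_forests_0)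
  then show ?thesis by (simp only: sum.empty)
next
  case (Suc k')
  let ?S = "{F \<in> in_forests w k'. i \<notin> Domain F}"
  let ?B = "\<lambda>F. {l. w i l > 0 \<and> forest_root F l \<noteq> i}"
  let ?f = "\<lambda>G. \<Sum>l | w i l > 0.
      w i l * subgraph_weight w G * (of_bool (forest_root G l = j) - of_bool (forest_root G i = j))"
  let ?a = "\<lambda>F u l. w i u * w i l * (of_bool (forest_root F l = j) - of_bool (forest_root F u = j))"
  have inner: "?f (insert (i, u) F) = subgraph_weight w F * (\<Sum>l\<in>?B F. ?a F u l)"
    if "F \<in> ?S" "u \<in> ?B F" for F u
  proof -
    have F: "forest F" "i \<notin> Domain F" and u: "forest_root F u \<noteq> i"
      using that by (auto simp: in_forests_iff)
    have "(i, u) \<notin> F" using F(2) by blast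
    then have "?f (insert (i, u) F) = (\<Sum>l\<in>?B F. subgraph_weight w F * ?a F u l)"
      using forest_root_insert_arc[OF F u] forest_root_insert_arc_tail[OF F u]
      by (intro sum.mono_neutral_cong_right) (auto simp: subgraph_weight_insert)
    then show ?thesis by (simp add: sum_distrib_left)
  qed
  have "(\<Sum>F\<in>{F \<in> in_forests w k. i \<in> Domain F}. ?f F)
      = (\<Sum>(F, u)\<in>Sigma ?S ?B. ?f (insert (i, u) F))"
    using sum.reindex_bij_betw[OF insert_out_arc_bij_betw, of ?f] Suc by (simp add: split_def)
  also have "\<dots> = (\<Sum>F\<in>?S. \<Sum>u\<in>?B F. ?f (insert (i, u) F))"
    by (rule sum.Sigma[symmetric]) auto
  also have "\<dots> = (\<Sum>F\<in>?S. subgraph_weight w F * (\<Sum>u\<in>?B F. \<Sum>l\<in>?B F. ?a F u l))"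
    using inner by (simp add: sum_distrib_left)
  also have "\<dots> = 0"
  proof -
    have "(\<Sum>u\<in>?B F. \<Sum>l\<in>?B F. ?a F u l) = 0" for F
      by (rule sum_sum_antisym_eq_0) (simp add: algebra_simps)
    then show ?thesis by simp
  qed
  finally show ?thesis .
qed

lemma sum_forests_out_arcs:
  fixes w :: "'n::finite \<Rightarrow> 'n \<Rightarrow> real"
  shows "(\<Sum>F\<in>in_forests w k. \<Sum>l | w i l > 0.
      w i l * subgraph_weight w F * (of_bool (forest_root F l = j) - of_bool (forest_root F i = j)))
    = (\<Sum>G\<in>in_forests w (Suc k).
      subgraph_weight w G * (of_bool (forest_root G i = j) - of_bool (i = j)))"
proof -
  have "in_forests w k \<inter> {F. i \<in> Domain F} = {F \<in> in_forests w k. i \<in> Domain F}"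
    and "in_forests w k - {F. i \<in> Domain F} = {F \<in> in_forests w k. i \<notin> Domain F}" by auto
  then have split: "sum g (in_forests w k)
      = sum g {F \<in> in_forests w k. i \<in> Domain F} + sum g {F \<in> in_forests w k. i \<notin> Domain F}"
    for g :: "('n \<times> 'n) set \<Rightarrow> real"
    using sum.Int_Diff[of "in_forests w k" g "{F. i \<in> Domain F}"] by simp
  show ?thesis
    unfolding split sum_forests_nonsink_out_arcs_eq_0 sum_forests_sink_out_arcs by simp
qed

lemma Qmat_entry:
  "Qmat w k $ i $ j = (\<Sum>F\<in>in_forests w k. subgraph_weight w F * of_bool (forest_root F i = j))"
  unfolding Qmat_def
  by (auto simp: in_forests_iff in_tree_rooted_at_iff Int_def intro: sum.cong)

lemma Qmat_0:
  fixes w :: "'n::finite \<Rightarrow> 'n \<Rightarrow> real"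
  shows "Qmat w 0 = mat 1"
proof -
  have "forest_root {} x = x" for x :: 'n
    by (rule forest_root_eq_self) (simp_all add: forest_def acyclic_def)
  then show ?thesis
    by (simp add: vec_eq_iff mat_def Qmat_entry in_forests_0 subgraph_weight_def)
qed

lemma laplacian_entry:
  assumes "w i i = 0"
  shows "laplacian w $ i $ l = of_bool (i = l) * (\<Sum>m\<in>UNIV. w i m) - w i l"
  using assms sum.remove[of UNIV i "w i"] by (cases "i = l") (simp_all add: laplacian_def)

lemma neg_laplacian_mult_Qmat:
  fixes w :: "'n::finite \<Rightarrow> 'n \<Rightarrow> real"
  assumes loopless: "\<forall>i. w i i = 0" and nonneg: "\<forall>i j. w i j \<ge> 0"
  shows "(- laplacian w) ** Qmat w k = Qmat w (Suc k) - sigma w (Suc k) *\<^sub>R mat 1"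
proof -
  have "((- laplacian w) ** Qmat w k) $ i $ j = Qmat w (Suc k) $ i $ j - sigma w (Suc k) * of_bool (i = j)"
    for i j
  proof -
    let ?q = "\<lambda>l. Qmat w k $ l $ j"
    have "((- laplacian w) ** Qmat w k) $ i $ j
        = (\<Sum>l\<in>UNIV. (w i l - of_bool (i = l) * (\<Sum>m\<in>UNIV. w i m)) * ?q l)"
      using loopless by (simp add: matrix_matrix_mult_def laplacian_entry)
    also have "\<dots> = (\<Sum>l\<in>UNIV. w i l * (?q l - ?q i))"
      by (simp add: left_diff_distrib right_diff_distrib sum_subtractf sum_distrib_right mult.assoc)
    also have "\<dots> = (\<Sum>l | w i l > 0. w i l * (?q l - ?q i))"
      using nonneg by (intro sum.mono_neutral_right) (auto simp: order.order_iff_strict)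
    also have "\<dots> = (\<Sum>l | w i l > 0. \<Sum>F\<in>in_forests w k.
        w i l * subgraph_weight w F * (of_bool (forest_root F l = j) - of_bool (forest_root F i = j)))"
      unfolding Qmat_entry sum_subtractf[symmetric] sum_distrib_left
      by (intro sum.cong refl) (simp add: algebra_simps)
    also have "\<dots> = (\<Sum>F\<in>in_forests w k. \<Sum>l | w i l > 0.
        w i l * subgraph_weight w F * (of_bool (forest_root F l = j) - of_bool (forest_root F i = j)))"
      by (rule sum.swap)
    also have "\<dots> = (\<Sum>G\<in>in_forests w (Suc k).
        subgraph_weight w G * (of_bool (forest_root G i = j) - of_bool (i = j)))"
      by (rule sum_forests_out_arcs)
    also have "\<dots> = Qmat w (Suc k) $ i $ j - sigma w (Suc k) * of_bool (i = j)"
      by (simp add: Qmat_entry sigma_def algebra_simps sum_subtractf sum_distrib_right)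
    finally show ?thesis .
  qed
  then show ?thesis by (simp add: vec_eq_iff mat_def)
qed

section \<open>The recurrence for alpha\<close>

text \<open>
  Here p i is the multiplicity of the part i in a partition of r into parts at most K, so
  alpha_sum s K r is the coefficient of t^r in 1/(1 + s 1 t + ... + s K t^K).
\<close>

definition part_counts :: "nat \<Rightarrow> nat \<Rightarrow> (nat \<Rightarrow> nat) set" where
  "part_counts K r = {p \<in> extensional {1..K}. (\<Sum>i=1..K. i * p i) = r}"

definition alpha_term :: "(nat \<Rightarrow> real) \<Rightarrow> nat \<Rightarrow> (nat \<Rightarrow> nat) \<Rightarrow> real" where
  "alpha_term s K p = (-1) ^ (\<Sum>i=1..K. p i) * (fact (\<Sum>i=1..K. p i) / (\<Prod>i=1..K. fact (p i)))
     * (\<Prod>i=1..K. s i ^ p i)"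

definition alpha_sum :: "(nat \<Rightarrow> real) \<Rightarrow> nat \<Rightarrow> nat \<Rightarrow> real" where
  "alpha_sum s K r = (\<Sum>p\<in>part_counts K r. alpha_term s K p)"

lemma alpha_eq_alpha_sum: "alpha w k = alpha_sum (sigma w) k k"
proof (cases "k = 0")
  case True
  then have "part_counts k k = {\<lambda>_. undefined}"
    by (auto simp: part_counts_def extensional_def)
  with True show ?thesis by (simp add: alpha_def alpha_sum_def alpha_term_def)
qed (simp add: alpha_def alpha_sum_def alpha_term_def part_counts_def)

lemma finite_part_counts: "finite (part_counts K r)"
proof (rule finite_subset)
  show "part_counts K r \<subseteq> PiE {1..K} (\<lambda>_. {0..r})"
  proof
    fix p assume p: "p \<in> part_counts K r"
    have "p i \<le> r" if "i \<in> {1..K}" for i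
    proof -
      have "p i \<le> i * p i" using that by simp
      also have "\<dots> \<le> (\<Sum>m=1..K. m * p m)" by (rule member_le_sum) (use that in auto)
      finally show ?thesis using p by (simp add: part_counts_def)
    qed
    with p show "p \<in> PiE {1..K} (\<lambda>_. {0..r})" by (auto simp: part_counts_def PiE_def)
  qed
qed (rule finite_PiE; simp)

lemma sum_fun_upd_remove:
  assumes "finite A" "i \<in> A"
  shows "(\<Sum>m\<in>A. h m ((p(i := v)) m)) = h i v + (\<Sum>m\<in>A - {i}. h m (p m))"
proof -
  have "(\<Sum>m\<in>A - {i}. h m ((p(i := v)) m)) = (\<Sum>m\<in>A - {i}. h m (p m))"
    by (rule sum.cong) auto
  then show ?thesis
    using sum.remove[OF assms, of "\<lambda>m. h m ((p(i := v)) m)"] by (simp del: fun_upd_apply add: fun_upd_same)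
qed

lemma prod_fun_upd_remove:
  assumes "finite A" "i \<in> A"
  shows "(\<Prod>m\<in>A. h m ((p(i := v)) m)) = h i v * (\<Prod>m\<in>A - {i}. h m (p m))"
proof -
  have "(\<Prod>m\<in>A - {i}. h m ((p(i := v)) m)) = (\<Prod>m\<in>A - {i}. h m (p m))"
    by (rule prod.cong) auto
  then show ?thesis
    using prod.remove[OF assms, of "\<lambda>m. h m ((p(i := v)) m)"] by (simp del: fun_upd_apply add: fun_upd_same)
qed

lemma alpha_term_add_part:
  assumes i: "i \<in> {1..K}"
  shows "real (Suc (\<Sum>m=1..K. q m)) * (s i * alpha_term s K q)
    = - real (Suc (q i)) * alpha_term s K (q(i := Suc (q i)))"
proof -
  let ?p = "q(i := Suc (q i))"
  define n where "n = (\<Sum>m=1..K. q m)"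
  define c where "c = real (Suc (q i))"
  define D where "D = (\<Prod>m=1..K. fact (q m) :: real)"
  define S where "S = (\<Prod>m=1..K. s m ^ q m)"
  have fin: "finite {1..K}" by simp
  have "(\<Sum>m=1..K. ?p m) = Suc (q i) + (\<Sum>m\<in>{1..K} - {i}. q m)"
    using sum_fun_upd_remove[OF fin i, of "\<lambda>_ x. x" q "Suc (q i)"] by simp
  also have "\<dots> = Suc n" using sum.remove[OF fin i, of q] by (simp add: n_def)
  finally have n: "(\<Sum>m=1..K. ?p m) = Suc n" .
  have D: "(\<Prod>m=1..K. fact (?p m) :: real) = c * D"
    using prod_fun_upd_remove[OF fin i, of "\<lambda>_ x. fact x :: real" q "Suc (q i)"]
      prod.remove[OF fin i, of "\<lambda>m. fact (q m) :: real"]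
    by (simp add: c_def D_def)
  have S: "(\<Prod>m=1..K. s m ^ ?p m) = s i * S"
    using prod_fun_upd_remove[OF fin i, of "\<lambda>m x. s m ^ x" q "Suc (q i)"]
      prod.remove[OF fin i, of "\<lambda>m. s m ^ q m"]
    by (simp add: S_def)
  have "c \<noteq> 0" "D \<noteq> 0" by (simp_all add: c_def D_def)
  then show ?thesis
    unfolding alpha_term_def n D S n_def[symmetric] c_def[symmetric] D_def[symmetric] S_def[symmetric]
    by (simp add: field_simps)
qed

text \<open>Pascal's rule for multinomial coefficients.\<close>

lemma alpha_term_rec:
  assumes "(\<Sum>m=1..K. p m) \<noteq> 0"
  shows "alpha_term s K p = - (\<Sum>i=1..K. if 0 < p i then s i * alpha_term s K (p(i := p i - 1)) else 0)"
proof -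
  define n where "n = (\<Sum>m=1..K. p m)"
  have step: "real n * (if 0 < p i then s i * alpha_term s K (p(i := p i - 1)) else 0)
      = - real (p i) * alpha_term s K p" if i: "i \<in> {1..K}" for i
  proof (cases "p i = 0")
    case False
    let ?q = "p(i := p i - 1)"
    have "?q(i := Suc (?q i)) = p" using False by auto
    moreover have "Suc (\<Sum>m=1..K. ?q m) = n"
      using sum_fun_upd_remove[OF _ i, of "\<lambda>_ x. x" p "p i - 1"] sum.remove[OF _ i, of p] False
      by (simp add: n_def)
    ultimately show ?thesis
      using alpha_term_add_part[OF i, of ?q s] False by simp
  qed simp
  have "real n * (\<Sum>i=1..K. if 0 < p i then s i * alpha_term s K (p(i := p i - 1)) else 0)
      = (\<Sum>i=1..K. real n * (if 0 < p i then s i * alpha_term s K (p(i := p i - 1)) else 0))"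
    by (rule sum_distrib_left)
  also have "\<dots> = (\<Sum>i=1..K. - real (p i) * alpha_term s K p)"
    using step by (intro sum.cong) auto
  also have "\<dots> = - real n * alpha_term s K p"
    by (simp add: n_def sum_distrib_right[symmetric] sum_negf)
  finally have "real n * ((\<Sum>i=1..K. if 0 < p i then s i * alpha_term s K (p(i := p i - 1)) else 0)
      + alpha_term s K p) = 0" by (simp add: distrib_left)
  moreover have "n \<noteq> 0" using assms by (simp add: n_def)
  ultimately show ?thesis by (simp add: add_eq_0_iff)
qed

lemma sum_part_counts_remove_part:
  assumes i: "i \<in> {1..K}"
  shows "(\<Sum>p\<in>{p \<in> part_counts K r. 0 < p i}. alpha_term s K (p(i := p i - 1)))
    = (if i \<le> r then alpha_sum s K (r - i) else 0)"
proof -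
  have fin: "finite {1..K}" by simp
  define R where "R p = (\<Sum>m\<in>{1..K} - {i}. m * p m)" for p :: "nat \<Rightarrow> nat"
  have weight: "(\<Sum>m=1..K. m * p m) = i * p i + R p" for p
    using sum.remove[OF fin i, of "\<lambda>m. m * p m"] by (simp add: R_def)
  have weight_upd: "(\<Sum>m=1..K. m * (p(i := v)) m) = i * v + R p" for p v
    using sum_fun_upd_remove[OF fin i, of "\<lambda>m x. m * x" p v] by (simp add: R_def)
  have ext_upd: "p(i := v) \<in> extensional {1..K}" if "p \<in> extensional {1..K}" for p v
    using that i by (simp add: extensional_def)
  show ?thesis
  proof (cases "i \<le> r")
    case True
    have "bij_betw (\<lambda>q. q(i := Suc (q i))) (part_counts K (r - i)) {p \<in> part_counts K r. 0 < p i}"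
    proof (rule bij_betw_byWitness[where f' = "\<lambda>p. p(i := p i - 1)"])
      show "(\<lambda>q. q(i := Suc (q i))) ` part_counts K (r - i) \<subseteq> {p \<in> part_counts K r. 0 < p i}"
      proof (rule image_subsetI)
        fix q assume "q \<in> part_counts K (r - i)"
        then show "q(i := Suc (q i)) \<in> {p \<in> part_counts K r. 0 < p i}"
          using True weight[of q] weight_upd[of q "Suc (q i)"] ext_upd[of q "Suc (q i)"]
          by (simp add: part_counts_def)
      qed
      show "(\<lambda>p. p(i := p i - 1)) ` {p \<in> part_counts K r. 0 < p i} \<subseteq> part_counts K (r - i)"
      proof (rule image_subsetI, clarify)
        fix p assume "p \<in> part_counts K r" "0 < p i"
        moreover have "i * (p i - 1) = i * p i - i" by (simp add: diff_mult_distrib2)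
        ultimately show "p(i := p i - 1) \<in> part_counts K (r - i)"
          using weight[of p] weight_upd[of p "p i - 1"] ext_upd[of p "p i - 1"]
          by (simp add: part_counts_def)
      qed
    qed auto
    from sum.reindex_bij_betw[OF this, of "\<lambda>p. alpha_term s K (p(i := p i - 1))"] True
    show ?thesis by (simp add: alpha_sum_def)
  next
    case False
    have "p i = 0" if "p \<in> part_counts K r" for p
    proof (rule ccontr)
      assume "p i \<noteq> 0"
      then have "i \<le> i * p i" by simp
      also have "\<dots> \<le> r" using weight[of p] that by (simp add: part_counts_def)
      finally show False using False by simp
    qed
    then have "{p \<in> part_counts K r. 0 < p i} = {}" by auto
    then have "(\<Sum>p\<in>{p \<in> part_counts K r. 0 < p i}. alpha_term s K (p(i := p i - 1))) = 0"
      by (simp only: sum.empty)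
    with False show ?thesis by simp
  qed
qed

lemma alpha_sum_rec:
  assumes "0 < r"
  shows "alpha_sum s K r = - (\<Sum>i=1..K. if i \<le> r then s i * alpha_sum s K (r - i) else 0)"
proof -
  have "(\<Sum>m=1..K. p m) \<noteq> 0" if "p \<in> part_counts K r" for p
  proof
    assume "(\<Sum>m=1..K. p m) = 0"
    then have "(\<Sum>m=1..K. m * p m) = 0" by simp
    with that assms show False by (simp add: part_counts_def)
  qed
  then have "alpha_sum s K r = (\<Sum>p\<in>part_counts K r.
      - (\<Sum>i=1..K. if 0 < p i then s i * alpha_term s K (p(i := p i - 1)) else 0))"
    unfolding alpha_sum_def by (intro sum.cong refl alpha_term_rec)
  also have "\<dots> = - (\<Sum>i=1..K.
      s i * (\<Sum>p\<in>{p \<in> part_counts K r. 0 < p i}. alpha_term s K (p(i := p i - 1))))"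
    by (simp add: sum_negf sum.swap[of _ "part_counts K r"] sum.inter_filter finite_part_counts
        sum_distrib_left if_distrib cong: if_cong)
  also have "\<dots> = - (\<Sum>i=1..K. if i \<le> r then s i * alpha_sum s K (r - i) else 0)"
  proof (intro arg_cong[where f = uminus] sum.cong refl)
    fix i assume "i \<in> {1..K}"
    then show "s i * (\<Sum>p\<in>{p \<in> part_counts K r. 0 < p i}. alpha_term s K (p(i := p i - 1)))
      = (if i \<le> r then s i * alpha_sum s K (r - i) else 0)"
      using sum_part_counts_remove_part[OF \<open>i \<in> {1..K}\<close>] by simp
  qed
  finally show ?thesis .
qed

lemma alpha_sum_0: "alpha_sum s K 0 = 1"
proof -
  let ?zero = "restrict (\<lambda>_. 0::nat) {1..K}"
  have "p = ?zero" if p: "p \<in> part_counts K 0" for p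
  proof (rule extensionalityI[of _ "{1..K}"])
    show "p \<in> extensional {1..K}" using p by (simp add: part_counts_def)
    fix m assume "m \<in> {1..K}"
    then show "p m = ?zero m" using p by (simp add: part_counts_def sum_eq_0_iff)
  qed simp
  moreover have "?zero \<in> part_counts K 0" by (simp add: part_counts_def)
  ultimately have "part_counts K 0 = {?zero}" by blast
  moreover have "alpha_term s K ?zero = 1" by (simp add: alpha_term_def)
  ultimately show ?thesis by (simp add: alpha_sum_def)
qed

lemma alpha_sum_rec_le:
  assumes "0 < r" "r \<le> K"
  shows "alpha_sum s K r = - (\<Sum>i=1..r. s i * alpha_sum s K (r - i))"
proof -
  have "(\<Sum>i=1..K. if i \<le> r then s i * alpha_sum s K (r - i) else 0)
      = (\<Sum>i\<in>{i \<in> {1..K}. i \<le> r}. s i * alpha_sum s K (r - i))"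
    by (rule sum.inter_filter[symmetric]) simp
  also have "{i \<in> {1..K}. i \<le> r} = {1..r}" using assms(2) by auto
  finally show ?thesis using alpha_sum_rec[OF assms(1)] by simp
qed

lemma alpha_sum_stable: "r \<le> K \<Longrightarrow> alpha_sum s K r = alpha_sum s r r"
proof (induction r arbitrary: K rule: less_induct)
  case (less r)
  show ?case
  proof (cases "r = 0")
    case True
    then show ?thesis by (simp add: alpha_sum_0)
  next
    case False
    then have "0 < r" by simp
    have "(\<Sum>i=1..r. s i * alpha_sum s K (r - i)) = (\<Sum>i=1..r. s i * alpha_sum s r (r - i))"
    proof (rule sum.cong[OF refl])
      fix i assume "i \<in> {1..r}"
      then have "r - i < r" "r - i \<le> K" "r - i \<le> r" using less.prems by auto
      then show "s i * alpha_sum s K (r - i) = s i * alpha_sum s r (r - i)"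
        using less.IH[of "r - i" K] less.IH[of "r - i" r] by simp
    qed
    then show ?thesis
      using alpha_sum_rec_le[OF \<open>0 < r\<close> less.prems] alpha_sum_rec_le[OF \<open>0 < r\<close> order_refl]
      by simp
  qed
qed

lemma alpha_0: "alpha w 0 = 1"
  by (simp add: alpha_def)

lemma alpha_Suc: "alpha w (Suc m) = - (\<Sum>k=0..m. alpha w k * sigma w (Suc m - k))"
proof -
  have "alpha w (Suc m) = - (\<Sum>i=1..Suc m. sigma w i * alpha_sum (sigma w) (Suc m) (Suc m - i))"
    unfolding alpha_eq_alpha_sum by (rule alpha_sum_rec_le) simp_all
  also have "\<dots> = - (\<Sum>i=1..Suc m. sigma w i * alpha w (Suc m - i))"
    by (simp add: alpha_eq_alpha_sum alpha_sum_stable[of "Suc m - _" "Suc m"])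
  also have "(\<Sum>i=1..Suc m. sigma w i * alpha w (Suc m - i))
      = (\<Sum>k=0..m. alpha w k * sigma w (Suc m - k))"
    by (rule sum.reindex_bij_witness[of _ "\<lambda>k. Suc m - k" "\<lambda>i. Suc m - i"]) auto
  finally show ?thesis .
qed

section \<open>Powers of the Laplacian\<close>

lemma matpow_commute: "matpow A m ** A = A ** matpow A m"
  by (induction m) (simp_all add: matrix_mul_assoc[symmetric])

lemma matrix_mul_sum_right:
  fixes A :: "'a::semiring_1^'n^'m"
  shows "A ** sum f S = (\<Sum>k\<in>S. A ** f k)"
  by (induction S rule: infinite_finite_induct) (simp_all add: matrix_add_ldistrib)

lemma matpow_expansion:
  fixes M :: "real^'n^'n" and Q :: "nat \<Rightarrow> real^'n^'n"
  assumes Q0: "Q 0 = mat 1"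
    and QSuc: "\<And>k. M ** Q k = Q (Suc k) - s (Suc k) *\<^sub>R mat 1"
    and a0: "a 0 = 1"
    and aSuc: "\<And>m. a (Suc m) = - (\<Sum>k=0..m. a k * s (Suc m - k))"
  shows "matpow M m = (\<Sum>k=0..m. a k *\<^sub>R Q (m - k))"
proof (induction m)
  case 0
  then show ?case by (simp add: Q0 a0)
next
  case (Suc m)
  have "matpow M (Suc m) = M ** matpow M m" by (simp add: matpow_commute)
  also have "\<dots> = (\<Sum>k=0..m. a k *\<^sub>R (M ** Q (m - k)))"
    by (simp add: Suc.IH matrix_mul_sum_right matrix_scalar_ac scalar_matrix_assoc)
  also have "\<dots> = (\<Sum>k=0..m. a k *\<^sub>R Q (Suc m - k) - (a k * s (Suc m - k)) *\<^sub>R mat 1)"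
    by (intro sum.cong refl) (simp add: QSuc Suc_diff_le scaleR_diff_right)
  also have "\<dots> = (\<Sum>k=0..m. a k *\<^sub>R Q (Suc m - k)) + a (Suc m) *\<^sub>R Q 0"
    by (simp add: sum_subtractf scaleR_sum_left aSuc Q0)
  also have "\<dots> = (\<Sum>k=0..Suc m. a k *\<^sub>R Q (Suc m - k))" by simp
  finally show ?case .
qed

theorem proposition8:
  fixes w :: "'n::finite \<Rightarrow> 'n \<Rightarrow> real"
  assumes "CARD('n) > 1"
    and "\<forall>i. w i i = 0"
    and "\<forall>i j. w i j \<ge> 0"
  shows "\<forall>m. matpow (- laplacian w) m = (\<Sum>k=0..m. alpha w k *\<^sub>R Qmat w (m - k))"
proof
  fix m
  show "matpow (- laplacian w) m = (\<Sum>k=0..m. alpha w k *\<^sub>R Qmat w (m - k))"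
    by (rule matpow_expansion[OF Qmat_0 neg_laplacian_mult_Qmat[OF assms(2,3)] alpha_0 alpha_Suc])
qed

end
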